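(* Let $r\ge1$, let $x_0,y_0$ be positive integers and let $\{(X_t,Y_t)\}_{t\ge 0}$ be the CA competition process with fitness ratio $r$ started at $(x_0,y_0)$. Let $\tau_1=\inf\{t\ge 0: X_t=Y_t\}$ be the time of the first tie. Then \[ \mathbb{P}[\tau_1<\infty]\le\begin{cases}1, & x_0\le y_0,\\[2pt] \dfrac{(y_0)_{x_0-y_0}}{(rx_0+y_0)_{x_0-y_0}}\left(1+\dfrac1r\right)^{x_0-y_0}, & x_0>y_0.\end{cases} \]
   Context: The CA competition process with fitness ratio $r\ge 1$ started at $(x_0,y_0)$ is the discrete-time Markov chain $\{(X_t,Y_t)\}_{t\ge0}$ on $\{(x,y)\in\mathbb{Z}^2: x\ge1,y\ge1\}$ with $(X_0,Y_0)=(x_0,y_0)$ and transition probabilities: from $(x,y)$ it moves to $(x+1,y)$ with probability $\frac{rx}{rx+y}$ and to $(x,y+1)$ with probability $\frac{y}{rx+y}$. $(x)_k=\prod_{i=0}^{k-1}(x+i)$ denotes the Pochhammer symbol (with $(x)_0=1$); $\inf\emptyset=\infty$. *)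

theory Defs
  imports Complex_Main
begin

text \<open>CA competition process with fitness ratio r: from (x,y) move to (x+1,y) with
probability r x/(r x + y) and to (x,y+1) with probability y/(r x + y).
tie_within r n x y is the probability, starting from (x,y), that the first tie time
tau_1 = inf {t >= 0. X_t = Y_t} satisfies tau_1 <= n (first-step analysis).\<close>

fun tie_within :: "real \<Rightarrow> nat \<Rightarrow> nat \<Rightarrow> nat \<Rightarrow> real" where
  "tie_within r 0 x y = (if x = y then 1 else 0)"
| "tie_within r (Suc n) x y =
     (if x = y then 1
      else (r * real x / (r * real x + real y)) * tie_within r n (Suc x) y
         + (real y / (r * real x + real y)) * tie_within r n x (Suc y))"

text \<open>P[tau_1 < infinity] = sup_n P[tau_1 <= n] (continuity from below).\<close>
definition tie_prob :: "real \<Rightarrow> nat \<Rightarrow> nat \<Rightarrow> real" where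
  "tie_prob r x y = (SUP n. tie_within r n x y)"

end

theory Submission imports Defs begin

text \<open>By first-step analysis the finite-horizon tie probabilities are dominated by any
nonnegative function that equals 1 on and above the diagonal and is superharmonic for the
chain below it. With \<open>k = x - y\<close>, \<open>a = r x + y\<close> and \<open>c = 1 + 1/r\<close>, the bound
\<open>B(x,y) = (y)\<^sub>k / (a)\<^sub>k \<cdot> c\<^sup>k\<close> is such a function: the \<open>y\<close>-step contributes exactly
\<open>B(x,y)/c = r/(r+1) \<cdot> B(x,y)\<close>, and the \<open>x\<close>-step at most \<open>B(x,y)/(r+1)\<close>, which
reduces to \<open>(a)\<^sub>k (a + k) \<le> a (a + r)\<^sub>k\<close> since \<open>a + k = (r+1) x\<close>.\<close>

lemma pochhammer_mult_le_shifted: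
  fixes a r :: real
  assumes "a \<ge> 0" "r \<ge> 1"
  shows "pochhammer a k * (a + real k) \<le> a * pochhammer (a + r) k"
proof (induction k)
  case 0 then show ?case by simp
next
  case (Suc k)
  have "pochhammer (a + r) k \<ge> 0" using assms by (intro pochhammer_nonneg) auto
  have "pochhammer a (Suc k) * (a + real (Suc k)) = pochhammer a k * (a + real k) * (a + real k + 1)"
    by (simp add: pochhammer_Suc algebra_simps)
  also have "\<dots> \<le> a * pochhammer (a + r) k * (a + real k + 1)"
    using Suc assms by (intro mult_right_mono) auto
  also have "\<dots> \<le> a * pochhammer (a + r) k * (a + r + real k)"
    using assms \<open>pochhammer (a + r) k \<ge> 0\<close> by (intro mult_left_mono) auto
  also have "\<dots> = a * pochhammer (a + r) (Suc k)"
    by (simp add: pochhammer_Suc algebra_simps)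
  finally show ?case .
qed

definition tie_bound :: "real \<Rightarrow> nat \<Rightarrow> nat \<Rightarrow> real" where
  "tie_bound r x y = pochhammer (real y) (x - y) / pochhammer (r * real x + real y) (x - y)
                     * (1 + 1 / r) ^ (x - y)"

lemma tie_bound_above_diagonal: "x \<le> y \<Longrightarrow> tie_bound r x y = 1"
  by (simp add: tie_bound_def)

lemma tie_bound_nonneg:
  assumes "r \<ge> 1" "y \<ge> 1"
  shows "tie_bound r x y \<ge> 0"
  using assms unfolding tie_bound_def
  by (intro mult_nonneg_nonneg divide_nonneg_nonneg pochhammer_nonneg add_nonneg_pos) auto

lemma tie_bound_step_y:
  assumes "y < x"
  shows "real y / (r * real x + real y) * tie_bound r x (Suc y) * (1 + 1 / r) = tie_bound r x y"
proof -
  obtain m where m: "x - y = Suc m" "x - Suc y = m"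
    using assms by (metis Suc_diff_Suc)
  have "r * real x + real (Suc y) = (r * real x + real y) + 1" by simp
  then show ?thesis
    unfolding tie_bound_def m by (simp add: pochhammer_rec field_simps)
qed

lemma tie_bound_step_x:
  assumes r: "r \<ge> 1" and y: "y \<ge> 1" and "y \<le> x"
  shows "r * real x / (r * real x + real y) * tie_bound r (Suc x) y * (r + 1) \<le> tie_bound r x y"
proof -
  define k where "k = x - y"
  define a where "a = r * real x + real y"
  define c where "c = 1 + 1 / r"
  define P where "P = pochhammer (real y) k * c ^ k"
  have x: "real x = real y + real k" using \<open>y \<le> x\<close> by (simp add: k_def)
  have a: "a > 0" using r y by (simp add: a_def add_nonneg_pos)
  have "P \<ge> 0" using r y unfolding P_def c_def by (intro mult_nonneg_nonneg pochhammer_nonneg) auto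
  have Pa: "pochhammer a k > 0" and Par: "pochhammer (a + r) k > 0"
    using a r by (simp_all add: pochhammer_pos)
  have shifted: "pochhammer a k * ((r + 1) * real x) \<le> a * pochhammer (a + r) k"
    using pochhammer_mult_le_shifted[of a r k] a r by (simp add: a_def x algebra_simps)
  have "(r + 1) * real x \<le> a + r + real k"
    using r by (simp add: a_def x algebra_simps)
  from mult_mono[OF shifted this] have
    "pochhammer a k * ((r + 1) * real x) * ((r + 1) * real x)
     \<le> a * pochhammer (a + r) k * (a + r + real k)"
    using a r Par by simp
  then have ratio: "((r + 1) * real x) ^ 2 / (a * pochhammer (a + r) k * (a + r + real k))
                    \<le> 1 / pochhammer a k"
    using a r Pa Par by (simp add: divide_simps power2_eq_square add_pos_pos mult_ac)
  have "x - y = k" "Suc x - y = Suc k" using \<open>y \<le> x\<close> by (simp_all add: k_def)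
  moreover have "r * real (Suc x) + real y = a + r" by (simp add: a_def algebra_simps)
  moreover have "pochhammer (real y) (Suc k) = pochhammer (real y) k * real x"
    by (simp add: pochhammer_Suc x)
  ultimately have "r * real x / a * tie_bound r (Suc x) y * (r + 1)
        = P * ((c * r) * (r + 1) * real x * real x / (a * pochhammer (a + r) k * (a + r + real k)))"
    unfolding tie_bound_def P_def c_def[symmetric] by (simp add: pochhammer_Suc field_simps)
  also have "c * r = r + 1" using r by (simp add: c_def field_simps)
  finally have "r * real x / a * tie_bound r (Suc x) y * (r + 1)
        = P * (((r + 1) * real x) ^ 2 / (a * pochhammer (a + r) k * (a + r + real k)))"
    by (simp add: power2_eq_square mult_ac)
  also have "\<dots> \<le> P * (1 / pochhammer a k)"
    using ratio \<open>P \<ge> 0\<close> by (rule mult_left_mono)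
  also have "\<dots> = tie_bound r x y"
    by (simp add: tie_bound_def P_def a_def c_def k_def)
  finally show ?thesis unfolding a_def .
qed

lemma tie_bound_superharmonic:
  assumes r: "r \<ge> 1" and "y \<ge> 1" and "y < x"
  shows "r * real x / (r * real x + real y) * tie_bound r (Suc x) y
         + real y / (r * real x + real y) * tie_bound r x (Suc y) \<le> tie_bound r x y"
proof -
  let ?q = "real y / (r * real x + real y) * tie_bound r x (Suc y)"
  have "(1 + 1 / r) * (r / (r + 1)) = 1" using r by (simp add: divide_simps)
  then have "?q = ?q * ((1 + 1 / r) * (r / (r + 1)))" by (simp only: mult_1_right)
  also have "\<dots> = r / (r + 1) * (?q * (1 + 1 / r))" by (simp only: ac_simps)
  also have "\<dots> = r / (r + 1) * tie_bound r x y"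
    by (simp only: tie_bound_step_y[OF \<open>y < x\<close>])
  finally have "?q = r / (r + 1) * tie_bound r x y" .
  moreover have "r * real x / (r * real x + real y) * tie_bound r (Suc x) y
                 \<le> tie_bound r x y / (r + 1)"
    using tie_bound_step_x[OF assms(1,2)] \<open>y < x\<close> r by (simp add: field_simps)
  moreover have "tie_bound r x y / (r + 1) + r / (r + 1) * tie_bound r x y = tie_bound r x y"
  proof -
    have "1 / (r + 1) + r / (r + 1) = 1" using r by (simp add: add_divide_distrib[symmetric])
    then show ?thesis by (metis distrib_right mult_1 times_divide_eq_left)
  qed
  ultimately show ?thesis by linarith
qed

lemma tie_within_le_tie_bound:
  assumes r: "r \<ge> 1"
  shows "y \<ge> 1 \<Longrightarrow> tie_within r n x y \<le> tie_bound r x y"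
proof (induction n arbitrary: x y)
  case 0
  then show ?case
    using tie_bound_nonneg[OF r 0, of x] by (auto simp: tie_bound_above_diagonal)
next
  case (Suc n)
  let ?p = "r * real x / (r * real x + real y)" and ?q = "real y / (r * real x + real y)"
  have den: "r * real x + real y > 0" using r Suc.prems by (simp add: add_nonneg_pos)
  have pq: "?p \<ge> 0" "?q \<ge> 0" using r den by simp_all
  have first_step: "tie_within r (Suc n) x y
      = ?p * tie_within r n (Suc x) y + ?q * tie_within r n x (Suc y)" if "x \<noteq> y"
    using that by simp
  consider "x = y" | "x < y" | "y < x" by linarith
  then show ?case
  proof cases
    case 1 then show ?thesis by (simp add: tie_bound_above_diagonal)
  next
    case 2
    have "tie_within r (Suc n) x y \<le> ?p * 1 + ?q * 1"
      unfolding first_step[OF less_imp_neq[OF 2]]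
      using Suc.IH[of y "Suc x"] Suc.IH[of "Suc y" x] 2 Suc.prems pq
      by (intro add_mono mult_left_mono) (simp_all add: tie_bound_above_diagonal)
    also have "\<dots> = 1" using den by (simp add: add_divide_distrib[symmetric])
    finally show ?thesis using 2 by (simp add: tie_bound_above_diagonal)
  next
    case 3
    have "tie_within r (Suc n) x y \<le> ?p * tie_bound r (Suc x) y + ?q * tie_bound r x (Suc y)"
      unfolding first_step[OF less_imp_neq[OF 3, symmetric]]
      using Suc.IH[of y "Suc x"] Suc.IH[of "Suc y" x] Suc.prems pq
      by (intro add_mono mult_left_mono) simp_all
    also have "\<dots> \<le> tie_bound r x y"
      by (rule tie_bound_superharmonic[OF r Suc.prems 3])
    finally show ?thesis .
  qed
qed

theorem lemma4:
  fixes r :: real and x0 y0 :: nat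
  assumes "r \<ge> 1" and "x0 \<ge> 1" and "y0 \<ge> 1"
  shows "tie_prob r x0 y0 \<le>
    (if x0 \<le> y0 then 1
     else pochhammer (real y0) (x0 - y0) / pochhammer (r * real x0 + real y0) (x0 - y0)
          * (1 + 1 / r) ^ (x0 - y0))"
proof -
  have "tie_prob r x0 y0 \<le> tie_bound r x0 y0"
    unfolding tie_prob_def
    using tie_within_le_tie_bound[OF assms(1,3)] by (intro cSUP_least) auto
  then show ?thesis by (cases "x0 \<le> y0") (simp_all add: tie_bound_def)
qed

end
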